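(* Let $\mathcal{M}=(\mathcal{S},\mathcal{A},\mathcal{P},r,p_0)$ be an infinite-horizon MDP as described in the context, let $D\in\mathbb{N}$, let $\gamma_0,\dots,\gamma_D\in(0,1)$, and let $\pi$ be a stationary policy. For $d\in\{0,\dots,D\}$ let $$Q_d^\pi(s,a):=\mathbb{E}_\pi\Big[\sum_{t=0}^\infty \Phi_d(t)\, r(s_t,a_t)\,\Big|\, s_0=s,a_0=a\Big].$$ Define the operator $T_\pi^D$ on bounded functions $q:\mathcal{S}\times\mathcal{A}\to\mathbb{R}$ by $$[T_\pi^D(q)](s,a)= r_D^\pi(s,a)+\gamma_D\,\mathbb{E}_{s'\sim\mathcal{P}(s,a),\,a'\sim\pi(s')}\big[q(s',a')\big],\qquad r_D^\pi(s,a):=\mathbb{E}_{s'\sim\mathcal{P}(s,a),\,a'\sim\pi(s')}\Big[r(s,a)+\sum_{d=0}^{D-1}\gamma_d\,Q_d^\pi(s',a')\Big].$$ Then $T_\pi^D$ is a $\gamma_D$-contraction and $Q_D^\pi$ is its unique fixed point.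
   Context: $\mathcal{S}\subseteq\mathbb{R}^{k}$ and $\mathcal{A}\subseteq\mathbb{R}^{k'}$ are finite or compact sets, $\mathcal{P}:\mathcal{S}\times\mathcal{A}\to\Delta(\mathcal{S})$ is a transition kernel, $r:\mathcal{S}\times\mathcal{A}\to\mathbb{R}$ is a continuous reward function, $p_0\in\Delta(\mathcal{S})$ an initial distribution. $\mathbb{E}_\pi$ denotes expectation over trajectories $(s_t,a_t)_{t\ge0}$ with $s_{t+1}\sim\mathcal{P}(s_t,a_t)$ and $a_t\sim\pi(s_t)$ for $t\ge1$. For discount factors $\gamma_0,\dots,\gamma_D\in(0,1)$ and $d\le D$, the delayed weights are $$\Phi_d(t):=\sum_{\substack{(a_0,\dots,a_d)\in\mathbb{N}^{d+1}\\ a_0+\dots+a_d=t}}\ \prod_{i=0}^{d}\gamma_i^{a_i},\qquad t\in\mathbb{N},$$ so that $\Phi_0(t)=\gamma_0^t$. Contraction is with respect to the supremum norm. *)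

theory Defs
  imports "HOL-Probability.Probability"
begin

definition Phi :: "(nat \<Rightarrow> real) \<Rightarrow> nat \<Rightarrow> nat \<Rightarrow> real" where
  "Phi gam d t =
     (\<Sum>a \<in> {a::nat \<Rightarrow> nat. (\<forall>i. d < i \<longrightarrow> a i = 0) \<and> (\<Sum>i\<le>d. a i) = t}.
        \<Prod>i\<le>d. gam i ^ a i)"

definition sa_step ::
  "('s \<Rightarrow> 'a \<Rightarrow> 's measure) \<Rightarrow> ('s \<Rightarrow> 'a measure) \<Rightarrow> ('s \<Rightarrow> 'a \<Rightarrow> real) \<Rightarrow> 's \<Rightarrow> 'a \<Rightarrow> real" where
  "sa_step P pol f s a = (\<integral>s'. (\<integral>a'. f s' a' \<partial>pol s') \<partial>P s a)"

text \<open>E_pi[ r(s_t,a_t) | s_0 = s, a_0 = a ] = (K^t r)(s,a); hence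
  Q_d(s,a) = sum_t Phi_d(t) * E_pi[ r(s_t,a_t) | s_0 = s, a_0 = a ].\<close>
definition Qfun ::
  "('s \<Rightarrow> 'a \<Rightarrow> 's measure) \<Rightarrow> ('s \<Rightarrow> 'a measure) \<Rightarrow> ('s \<Rightarrow> 'a \<Rightarrow> real) \<Rightarrow> (nat \<Rightarrow> real)
     \<Rightarrow> nat \<Rightarrow> 's \<Rightarrow> 'a \<Rightarrow> real" where
  "Qfun P pol r gam d s a = (\<Sum>t. Phi gam d t * ((sa_step P pol ^^ t) r) s a)"

definition TD ::
  "('s \<Rightarrow> 'a \<Rightarrow> 's measure) \<Rightarrow> ('s \<Rightarrow> 'a measure) \<Rightarrow> ('s \<Rightarrow> 'a \<Rightarrow> real) \<Rightarrow> (nat \<Rightarrow> real)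
     \<Rightarrow> nat \<Rightarrow> ('s \<Rightarrow> 'a \<Rightarrow> real) \<Rightarrow> 's \<Rightarrow> 'a \<Rightarrow> real" where
  "TD P pol r gam D q s a =
     sa_step P pol (\<lambda>s' a'. r s a + (\<Sum>d<D. gam d * Qfun P pol r gam d s' a')) s a
     + gam D * sa_step P pol q s a"

definition bfun_SA :: "'s::topological_space set \<Rightarrow> 'a::topological_space set \<Rightarrow> ('s \<Rightarrow> 'a \<Rightarrow> real) set" where
  "bfun_SA S A = {q. (\<lambda>(s,a). q s a) \<in> borel_measurable (restrict_space borel (S \<times> A))
                     \<and> bounded ((\<lambda>(s,a). q s a) ` (S \<times> A))}"

definition sup_dist :: "'s set \<Rightarrow> 'a set \<Rightarrow> ('s \<Rightarrow> 'a \<Rightarrow> real) \<Rightarrow> ('s \<Rightarrow> 'a \<Rightarrow> real) \<Rightarrow> real" where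
  "sup_dist S A q1 q2 = (SUP x\<in>S \<times> A. \<bar>q1 (fst x) (snd x) - q2 (fst x) (snd x)\<bar>)"

end

(* Write K for the one-step operator of the state-action chain, (K f)(s,a) = E[f(s',a')],
   so that Q_d = sum_t Phi_d(t) K^t r.  Splitting a weak composition of t+1 according to
   whether its last part vanishes gives Phi_d(t+1) = Phi_(d-1)(t+1) + gam_d Phi_d(t), whence
   Q_d = Q_(d-1) + gam_d K Q_d, and unrolling in d yields Q_D = r + sum_(d<=D) gam_d K Q_d:
   this is the fixed-point equation of T_D.  As T_D q is a fixed bounded function plus
   gam_D K q, and K averages against probability measures, T_D is a gam_D-contraction in the
   sup norm, so the fixed point is unique. *)
theory Submission
  imports Defs
begin

section \<open>Delayed weights\<close>

definition weak_compositions :: "nat \<Rightarrow> nat \<Rightarrow> (nat \<Rightarrow> nat) set" where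
  "weak_compositions d t = {a. (\<forall>i. d < i \<longrightarrow> a i = 0) \<and> (\<Sum>i\<le>d. a i) = t}"

lemma Phi_eq_sum_weak_compositions:
  "Phi gam d t = (\<Sum>a\<in>weak_compositions d t. \<Prod>i\<le>d. gam i ^ a i)"
  unfolding Phi_def weak_compositions_def ..

lemma weak_compositions_le:
  assumes "a \<in> weak_compositions d t"
  shows "a i \<le> t"
proof (cases "i \<le> d")
  case True
  then have "a i \<le> (\<Sum>j\<le>d. a j)" by (intro member_le_sum) auto
  then show ?thesis using assms by (simp add: weak_compositions_def)
qed (use assms in \<open>simp add: weak_compositions_def\<close>)

lemma finite_weak_compositions: "finite (weak_compositions d t)"
proof (rule finite_subset)
  show "weak_compositions d t \<subseteq> {a. \<forall>i. (i \<in> {..d} \<longrightarrow> a i \<in> {..t}) \<and> (i \<notin> {..d} \<longrightarrow> a i = 0)}"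
    using weak_compositions_le by (auto simp: weak_compositions_def)
qed (intro finite_set_of_finite_funs; simp)

lemma weak_compositions_0_right: "weak_compositions d 0 = {\<lambda>_. 0}"
proof -
  have "a = (\<lambda>_. 0)" if "a \<in> weak_compositions d 0" for a
    using weak_compositions_le[OF that] by auto
  then show ?thesis by (auto simp: weak_compositions_def)
qed

lemma weak_compositions_0_left: "weak_compositions 0 t = {\<lambda>i. if i = 0 then t else 0}"
proof -
  have "a = (\<lambda>i. if i = 0 then t else 0)" if "a \<in> weak_compositions 0 t" for a
    using that by (auto simp: weak_compositions_def)
  then show ?thesis by (auto simp: weak_compositions_def)
qed

lemma weak_compositions_Suc_Suc:
  "weak_compositions (Suc d) (Suc t) =
     weak_compositions d (Suc t) \<union> (\<lambda>a. a(Suc d := Suc (a (Suc d)))) ` weak_compositions (Suc d) t"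
proof (intro equalityI subsetI)
  fix a assume a: "a \<in> weak_compositions (Suc d) (Suc t)"
  show "a \<in> weak_compositions d (Suc t) \<union> (\<lambda>a. a(Suc d := Suc (a (Suc d)))) ` weak_compositions (Suc d) t"
  proof (cases "a (Suc d)")
    case 0
    have "a i = 0" if "d < i" for i
      using a 0 that by (cases "i = Suc d") (auto simp: weak_compositions_def)
    then have "a \<in> weak_compositions d (Suc t)"
      using a 0 by (auto simp: weak_compositions_def)
    then show ?thesis ..
  next
    case (Suc k)
    define b where "b = a(Suc d := k)"
    have "b \<in> weak_compositions (Suc d) t" and "a = b(Suc d := Suc (b (Suc d)))"
      using a Suc by (auto simp: weak_compositions_def b_def)
    then show ?thesis by blast
  qed
qed (auto simp: weak_compositions_def)

lemma Phi_0_right [simp]: "Phi gam d 0 = 1"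
  by (simp add: Phi_eq_sum_weak_compositions weak_compositions_0_right)

lemma Phi_0_left: "Phi gam 0 t = gam 0 ^ t"
  by (simp add: Phi_eq_sum_weak_compositions weak_compositions_0_left)

lemma Phi_Suc_Suc: "Phi gam (Suc d) (Suc t) = Phi gam d (Suc t) + gam (Suc d) * Phi gam (Suc d) t"
proof -
  let ?incr = "\<lambda>a. a(Suc d := Suc (a (Suc d)))"
  let ?w = "\<lambda>d a. \<Prod>i\<le>d. gam i ^ a i"
  have inj: "inj_on ?incr (weak_compositions (Suc d) t)"
  proof (rule inj_onI, rule ext)
    fix a b i assume "?incr a = ?incr b"
    then show "a i = b i" by (cases "i = Suc d") (auto dest: fun_cong[of _ _ i])
  qed
  have disjoint: "weak_compositions d (Suc t) \<inter> ?incr ` weak_compositions (Suc d) t = {}"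
    by (auto simp: weak_compositions_def)
  have "Phi gam (Suc d) (Suc t) =
      (\<Sum>a\<in>weak_compositions d (Suc t). ?w (Suc d) a) + (\<Sum>a\<in>?incr ` weak_compositions (Suc d) t. ?w (Suc d) a)"
    unfolding Phi_eq_sum_weak_compositions weak_compositions_Suc_Suc
    using finite_weak_compositions disjoint by (intro sum.union_disjoint) auto
  also have "(\<Sum>a\<in>weak_compositions d (Suc t). ?w (Suc d) a) = Phi gam d (Suc t)"
    unfolding Phi_eq_sum_weak_compositions by (intro sum.cong) (auto simp: weak_compositions_def)
  also have "(\<Sum>a\<in>?incr ` weak_compositions (Suc d) t. ?w (Suc d) a)
      = (\<Sum>a\<in>weak_compositions (Suc d) t. gam (Suc d) * ?w (Suc d) a)"
    unfolding sum.reindex[OF inj] comp_def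
  proof (intro sum.cong refl)
    fix a
    have "(\<Prod>i\<le>d. gam i ^ ?incr a i) = ?w d a" by (intro prod.cong) auto
    then show "?w (Suc d) (?incr a) = gam (Suc d) * ?w (Suc d) a" by simp
  qed
  also have "\<dots> = gam (Suc d) * Phi gam (Suc d) t"
    by (simp add: Phi_eq_sum_weak_compositions sum_distrib_left)
  finally show ?thesis .
qed

lemma Phi_nonneg: "(\<And>i. i \<le> d \<Longrightarrow> 0 \<le> gam i) \<Longrightarrow> 0 \<le> Phi gam d t"
  unfolding Phi_def by (intro sum_nonneg prod_nonneg) auto

lemma summable_linear_recursion:
  fixes a b :: "nat \<Rightarrow> real"
  assumes "summable b" "\<And>t. 0 \<le> b t" "\<And>t. 0 \<le> a t" "0 \<le> c" "c < 1"
    and rec: "\<And>t. a (Suc t) \<le> b (Suc t) + c * a t"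
  shows "summable a"
proof (rule summableI_nonneg_bounded)
  fix n
  let ?A = "\<lambda>n. \<Sum>t<n. a t"
  have "(\<Sum>t<n. b (Suc t)) \<le> (\<Sum>t. b (Suc t))"
    using assms by (intro sum_le_suminf) (auto simp: summable_Suc_iff)
  also have "\<dots> \<le> suminf b"
    using suminf_split_head[OF assms(1)] assms(2)[of 0] by simp
  finally have tail_b: "(\<Sum>t<n. b (Suc t)) \<le> suminf b" .
  have "?A (Suc n) = a 0 + (\<Sum>t<n. a (Suc t))" by (rule sum.lessThan_Suc_shift)
  also have "(\<Sum>t<n. a (Suc t)) \<le> (\<Sum>t<n. b (Suc t)) + c * ?A n"
    using sum_mono[of "{..<n}", OF rec] by (simp add: sum.distrib sum_distrib_left)
  finally have "?A (Suc n) \<le> a 0 + suminf b + c * ?A (Suc n)"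
    using tail_b mult_left_mono[of "?A n" "?A (Suc n)" c] assms by simp
  then have "?A (Suc n) \<le> (a 0 + suminf b) / (1 - c)"
    using assms by (simp add: pos_le_divide_eq algebra_simps)
  moreover have "?A n \<le> ?A (Suc n)" using assms by simp
  ultimately show "?A n \<le> (a 0 + suminf b) / (1 - c)" by linarith
qed (use assms in auto)

lemma summable_Phi:
  assumes "\<And>i. i \<le> d \<Longrightarrow> 0 < gam i \<and> gam i < 1"
  shows "summable (Phi gam d)"
  using assms
proof (induction d)
  case 0
  then show ?case by (simp add: Phi_0_left summable_geometric)
next
  case (Suc d)
  have nonneg: "0 \<le> gam i" if "i \<le> Suc d" for i
    using Suc.prems[OF that] by simp
  show ?case
  proof (rule summable_linear_recursion[where c = "gam (Suc d)"])
    show "summable (Phi gam d)" using Suc by simp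
    show "0 \<le> Phi gam d t" "0 \<le> Phi gam (Suc d) t" for t
      using nonneg by (auto intro: Phi_nonneg)
    show "Phi gam (Suc d) (Suc t) \<le> Phi gam d (Suc t) + gam (Suc d) * Phi gam (Suc d) t" for t
      by (simp only: Phi_Suc_Suc order_refl)
  qed (use Suc.prems[of "Suc d"] in auto)
qed

lemma abs_mult_bounded_le:
  fixes c x :: real
  assumes "0 \<le> c" "\<bar>x\<bar> \<le> M"
  shows "\<bar>c * x\<bar> \<le> c * M"
  using mult_left_mono[OF assms(2,1)] assms(1) by (simp add: abs_mult)

lemma summable_mult_bounded:
  fixes c X :: "nat \<Rightarrow> real"
  assumes "summable c" "\<And>t. 0 \<le> c t" "\<And>t. \<bar>X t\<bar> \<le> M"
  shows "summable (\<lambda>t. c t * X t)"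
proof (rule summable_comparison_test)
  show "\<exists>N. \<forall>t\<ge>N. norm (c t * X t) \<le> c t * M"
    using abs_mult_bounded_le[OF assms(2,3)] by auto
qed (rule summable_mult2[OF assms(1)])

lemma abs_suminf_mult_bounded_le:
  fixes c X :: "nat \<Rightarrow> real"
  assumes "summable c" "\<And>t. 0 \<le> c t" "\<And>t. \<bar>X t\<bar> \<le> M"
  shows "\<bar>\<Sum>t. c t * X t\<bar> \<le> suminf c * M"
proof -
  have "summable (\<lambda>t. c t * \<bar>X t\<bar>)"
    by (rule summable_mult_bounded[OF assms(1,2)]) (use assms(3) in simp)
  then have summable_abs: "summable (\<lambda>t. \<bar>c t * X t\<bar>)"
    using assms(2) by (simp add: abs_mult)
  then have "\<bar>\<Sum>t. c t * X t\<bar> \<le> (\<Sum>t. \<bar>c t * X t\<bar>)"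
    by (rule summable_rabs)
  also have "\<dots> \<le> (\<Sum>t. c t * M)"
    using summable_abs summable_mult2[OF assms(1)] abs_mult_bounded_le[OF assms(2,3)]
    by (intro suminf_le)
  also have "\<dots> = suminf c * M"
    using suminf_mult2[OF assms(1)] by simp
  finally show ?thesis .
qed

lemma summable_Phi_mult_bounded:
  fixes X :: "nat \<Rightarrow> real"
  assumes "\<And>i. i \<le> d \<Longrightarrow> 0 < gam i \<and> gam i < 1" "\<And>t. \<bar>X t\<bar> \<le> M"
  shows "summable (\<lambda>t. Phi gam d t * X t)"
proof (rule summable_mult_bounded)
  show "summable (Phi gam d)" using assms(1) by (rule summable_Phi)
  show "0 \<le> Phi gam d t" for t using assms(1) by (intro Phi_nonneg) (simp add: less_imp_le)
qed (rule assms(2))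

lemma suminf_Phi_split_head:
  fixes X :: "nat \<Rightarrow> real"
  assumes "\<And>i. i \<le> d \<Longrightarrow> 0 < gam i \<and> gam i < 1" "\<And>t. \<bar>X t\<bar> \<le> M"
  shows "(\<Sum>t. Phi gam d t * X t) = X 0 + (\<Sum>t. Phi gam d (Suc t) * X (Suc t))"
  using suminf_split_head[OF summable_Phi_mult_bounded[of d gam X M, OF assms]] by simp

lemma suminf_Phi_unfold:
  fixes X :: "nat \<Rightarrow> real"
  assumes gam: "\<And>i. i \<le> d \<Longrightarrow> 0 < gam i \<and> gam i < 1" and X: "\<And>t. \<bar>X t\<bar> \<le> M"
  shows "(\<Sum>t. Phi gam d t * X t) = X 0 + (\<Sum>i\<le>d. gam i * (\<Sum>t. Phi gam i t * X (Suc t)))"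
  using gam
proof (induction d)
  case 0
  have "(\<Sum>t. Phi gam 0 (Suc t) * X (Suc t)) = gam 0 * (\<Sum>t. Phi gam 0 t * X (Suc t))"
    using suminf_mult[OF summable_Phi_mult_bounded[of 0 gam "\<lambda>t. X (Suc t)" M, OF "0.prems" X]]
    by (simp add: Phi_0_left mult.assoc)
  then show ?case using suminf_Phi_split_head[of 0 gam X M, OF "0.prems" X] by simp
next
  case (Suc d)
  let ?c = "gam (Suc d)"
  have gam_d: "\<And>i. i \<le> d \<Longrightarrow> 0 < gam i \<and> gam i < 1" using Suc.prems by simp
  have "(\<Sum>t. Phi gam (Suc d) (Suc t) * X (Suc t))
      = (\<Sum>t. Phi gam d (Suc t) * X (Suc t) + ?c * (Phi gam (Suc d) t * X (Suc t)))"
    by (simp add: Phi_Suc_Suc algebra_simps)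
  also have "\<dots> = (\<Sum>t. Phi gam d (Suc t) * X (Suc t)) + ?c * (\<Sum>t. Phi gam (Suc d) t * X (Suc t))"
  proof -
    have "summable (\<lambda>t. Phi gam d (Suc t) * X (Suc t))"
      using summable_Phi_mult_bounded[of d gam X M, OF gam_d X]
        summable_Suc_iff[of "\<lambda>t. Phi gam d t * X t"] by simp
    moreover have "summable (\<lambda>t. Phi gam (Suc d) t * X (Suc t))"
      by (rule summable_Phi_mult_bounded[of "Suc d" gam "\<lambda>t. X (Suc t)" M, OF Suc.prems X])
    ultimately show ?thesis
      by (subst suminf_add[symmetric]) (auto intro: summable_mult simp: suminf_mult)
  qed
  also have "(\<Sum>t. Phi gam d (Suc t) * X (Suc t)) = (\<Sum>i\<le>d. gam i * (\<Sum>t. Phi gam i t * X (Suc t)))"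
    using suminf_Phi_split_head[of d gam X M, OF gam_d X] Suc.IH[OF gam_d] by simp
  finally show ?case using suminf_Phi_split_head[of "Suc d" gam X M, OF Suc.prems X] by simp
qed

section \<open>Bounded functions and the sup distance\<close>

lemma bfun_SA_iff:
  "q \<in> bfun_SA S A \<longleftrightarrow> (\<lambda>(s, a). q s a) \<in> borel_measurable (restrict_space borel (S \<times> A))
      \<and> (\<exists>M. \<forall>s\<in>S. \<forall>a\<in>A. \<bar>q s a\<bar> \<le> M)"
  unfolding bfun_SA_def bounded_real by auto

lemma bfun_SA_cong:
  assumes "q \<in> bfun_SA S A" "\<And>s a. s \<in> S \<Longrightarrow> a \<in> A \<Longrightarrow> q' s a = q s a"
  shows "q' \<in> bfun_SA S A"
proof -
  have "(\<lambda>(s, a). q s a) \<in> borel_measurable (restrict_space borel (S \<times> A))"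
    using assms(1) bfun_SA_iff by blast
  then have "(\<lambda>(s, a). q' s a) \<in> borel_measurable (restrict_space borel (S \<times> A))"
    by (rule measurable_cong[THEN iffD1, rotated]) (auto simp: space_restrict_space assms(2))
  then show ?thesis using assms bfun_SA_iff by metis
qed

lemma bfun_SA_const: "(\<lambda>_ _. c) \<in> bfun_SA S A"
  unfolding bfun_SA_iff by auto

lemma bfun_SA_add_scaled:
  assumes "q1 \<in> bfun_SA S A" "q2 \<in> bfun_SA S A"
  shows "(\<lambda>s a. q1 s a + c * q2 s a) \<in> bfun_SA S A"
proof -
  obtain M1 M2 where M1: "\<forall>s\<in>S. \<forall>a\<in>A. \<bar>q1 s a\<bar> \<le> M1" and M2: "\<forall>s\<in>S. \<forall>a\<in>A. \<bar>q2 s a\<bar> \<le> M2"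
    using assms bfun_SA_iff by metis
  have "\<bar>q1 s a + c * q2 s a\<bar> \<le> M1 + \<bar>c\<bar> * M2" if "s \<in> S" "a \<in> A" for s a
    using M1 M2 that abs_triangle_ineq[of "q1 s a" "c * q2 s a"]
      mult_left_mono[of "\<bar>q2 s a\<bar>" M2 "\<bar>c\<bar>"] by (force simp: abs_mult)
  moreover have "(\<lambda>(s, a). q1 s a + c * q2 s a) \<in> borel_measurable (restrict_space borel (S \<times> A))"
  proof -
    have [measurable]: "(\<lambda>(s, a). q1 s a) \<in> borel_measurable (restrict_space borel (S \<times> A))"
      "(\<lambda>(s, a). q2 s a) \<in> borel_measurable (restrict_space borel (S \<times> A))"
      using assms bfun_SA_iff by blast+
    have "(\<lambda>z. (\<lambda>(s, a). q1 s a) z + c * (\<lambda>(s, a). q2 s a) z) \<in> borel_measurable (restrict_space borel (S \<times> A))"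
      by measurable
    then show ?thesis by (simp add: split_beta')
  qed
  ultimately show ?thesis unfolding bfun_SA_iff by blast
qed

lemma bfun_SA_sum:
  assumes "finite I" "\<And>i. i \<in> I \<Longrightarrow> f i \<in> bfun_SA S A"
  shows "(\<lambda>s a. \<Sum>i\<in>I. c i * f i s a) \<in> bfun_SA S A"
  using assms
proof (induction I rule: finite_induct)
  case empty
  then show ?case using bfun_SA_const[of 0] by simp
next
  case (insert j I)
  then have "(\<lambda>s a. (\<Sum>i\<in>I. c i * f i s a) + c j * f j s a) \<in> bfun_SA S A"
    by (intro bfun_SA_add_scaled) auto
  then show ?case by (rule bfun_SA_cong) (simp add: insert)
qed

lemma bfun_SA_suminf:
  assumes "\<And>t. f t \<in> bfun_SA S A" "\<And>t s a. s \<in> S \<Longrightarrow> a \<in> A \<Longrightarrow> \<bar>f t s a\<bar> \<le> M"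
    and "summable c" "\<And>t. 0 \<le> c t"
  shows "(\<lambda>s a. \<Sum>t. c t * f t s a) \<in> bfun_SA S A"
proof -
  have [measurable]: "(\<lambda>(s, a). f t s a) \<in> borel_measurable (restrict_space borel (S \<times> A))" for t
    using assms(1) bfun_SA_iff by blast
  have "(\<lambda>z. \<Sum>t. c t * (\<lambda>(s, a). f t s a) z) \<in> borel_measurable (restrict_space borel (S \<times> A))"
    by measurable
  moreover have "\<forall>s\<in>S. \<forall>a\<in>A. \<bar>\<Sum>t. c t * f t s a\<bar> \<le> suminf c * M"
    using assms(2-4) by (intro ballI abs_suminf_mult_bounded_le) auto
  ultimately show ?thesis by (auto simp: bfun_SA_iff split_beta')
qed

lemma bfun_SA_continuous_on:
  assumes "compact S" "compact A" "continuous_on (S \<times> A) (\<lambda>(s, a). r s a)"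
  shows "r \<in> bfun_SA S A"
  unfolding bfun_SA_def
  using borel_measurable_continuous_on_restrict[OF assms(3)]
    compact_imp_bounded[OF compact_continuous_image[OF assms(3) compact_Times[OF assms(1,2)]]]
  by blast

lemma abs_le_sup_dist:
  assumes "q1 \<in> bfun_SA S A" "q2 \<in> bfun_SA S A" "s \<in> S" "a \<in> A"
  shows "\<bar>q1 s a - q2 s a\<bar> \<le> sup_dist S A q1 q2"
proof -
  obtain M1 M2 where "\<forall>s\<in>S. \<forall>a\<in>A. \<bar>q1 s a\<bar> \<le> M1" "\<forall>s\<in>S. \<forall>a\<in>A. \<bar>q2 s a\<bar> \<le> M2"
    using assms(1,2) bfun_SA_iff by metis
  then have "bdd_above ((\<lambda>z. \<bar>q1 (fst z) (snd z) - q2 (fst z) (snd z)\<bar>) ` (S \<times> A))"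
    by (intro bdd_aboveI2[where M = "M1 + M2"]) force
  then show ?thesis
    unfolding sup_dist_def using cSUP_upper[of "(s, a)" "S \<times> A"] assms(3,4) by force
qed

lemma sup_dist_le:
  assumes "S \<noteq> {}" "A \<noteq> {}" "\<And>s a. s \<in> S \<Longrightarrow> a \<in> A \<Longrightarrow> \<bar>q1 s a - q2 s a\<bar> \<le> C"
  shows "sup_dist S A q1 q2 \<le> C"
  unfolding sup_dist_def by (rule cSUP_least) (use assms in auto)

lemma sup_dist_cong:
  assumes "\<And>s a. s \<in> S \<Longrightarrow> a \<in> A \<Longrightarrow> q1 s a = q1' s a \<and> q2 s a = q2' s a"
  shows "sup_dist S A q1 q2 = sup_dist S A q1' q2'"
  unfolding sup_dist_def using assms by (intro SUP_cong) auto

section \<open>The one-step operator of the state-action chain\<close>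

lemma (in prob_space) abs_integral_le_const:
  fixes f :: "_ \<Rightarrow> real"
  assumes "f \<in> borel_measurable M" "\<And>x. x \<in> space M \<Longrightarrow> \<bar>f x\<bar> \<le> C"
  shows "\<bar>\<integral>x. f x \<partial>M\<bar> \<le> C"
proof -
  have "integrable M f"
    using assms by (intro integrable_const_bound[where B = C]) auto
  moreover have "f x \<le> C" "- C \<le> f x" if "x \<in> space M" for x
    using abs_le_D1[OF assms(2)[OF that]] abs_le_D2[OF assms(2)[OF that]] by auto
  ultimately have "(\<integral>x. f x \<partial>M) \<le> C" "- C \<le> (\<integral>x. f x \<partial>M)"
    by (auto intro!: integral_le_const integral_ge_const AE_I2)
  then show ?thesis by linarith
qed

lemma (in prob_space) integral_suminf_mult_bounded:
  fixes g :: "nat \<Rightarrow> _ \<Rightarrow> real"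
  assumes "\<And>t. g t \<in> borel_measurable M" "\<And>t x. x \<in> space M \<Longrightarrow> \<bar>g t x\<bar> \<le> C"
    and "summable c" "\<And>t. 0 \<le> c t"
  shows "(\<integral>x. (\<Sum>t. c t * g t x) \<partial>M) = (\<Sum>t. c t * (\<integral>x. g t x \<partial>M))"
proof -
  have "integrable M (g t)" for t
    using assms by (intro integrable_const_bound[where B = C]) auto
  moreover have "summable (\<lambda>t. norm (c t * g t x))" if "x \<in> space M" for x
    using summable_mult_bounded[OF assms(3,4), of "\<lambda>t. \<bar>g t x\<bar>" C] assms(2)[OF that] assms(4)
    by (simp add: abs_mult)
  moreover have "summable (\<lambda>t. \<integral>x. norm (c t * g t x) \<partial>M)"
  proof (rule summable_comparison_test)
    show "\<exists>N. \<forall>t\<ge>N. norm (\<integral>x. norm (c t * g t x) \<partial>M) \<le> c t * C"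
      using abs_integral_le_const[where C = "c t * C" and f = "\<lambda>x. norm (c t * g t x)" for t]
        abs_mult_bounded_le[OF assms(4,2)] assms(1) by auto
  qed (rule summable_mult2[OF assms(3)])
  ultimately have "(\<integral>x. (\<Sum>t. c t * g t x) \<partial>M) = (\<Sum>t. \<integral>x. c t * g t x \<partial>M)"
    by (intro integral_suminf AE_I2) auto
  then show ?thesis by simp
qed

lemma measurable_restrict_borel_Times:
  fixes S :: "'s::second_countable_topology set" and A :: "'a::second_countable_topology set"
  assumes "h \<in> borel_measurable (restrict_space borel (S \<times> A))"
  shows "h \<in> borel_measurable (restrict_space borel S \<Otimes>\<^sub>M restrict_space borel A)"
proof -
  have "(\<lambda>x. x) \<in> restrict_space borel S \<rightarrow>\<^sub>M borel" "(\<lambda>x. x) \<in> restrict_space borel A \<rightarrow>\<^sub>M borel"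
    by (rule measurable_restrict_space1[OF measurable_id])+
  then have "(\<lambda>x. (fst x, snd x)) \<in> restrict_space borel S \<Otimes>\<^sub>M restrict_space borel A \<rightarrow>\<^sub>M borel \<Otimes>\<^sub>M borel"
    by (intro measurable_Pair) (auto intro: measurable_compose[OF measurable_fst] measurable_compose[OF measurable_snd])
  then have "(\<lambda>x. x) \<in> restrict_space borel S \<Otimes>\<^sub>M restrict_space borel A \<rightarrow>\<^sub>M borel \<Otimes>\<^sub>M borel"
    by simp
  then have "(\<lambda>x. x) \<in> restrict_space borel S \<Otimes>\<^sub>M restrict_space borel A \<rightarrow>\<^sub>M restrict_space borel (S \<times> A)"
    by (intro measurable_restrict_space2) (auto simp: borel_prod space_pair_measure space_restrict_space)
  then show ?thesis using measurable_compose[OF _ assms] by auto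
qed

locale sa_kernel =
  fixes S :: "'s::second_countable_topology set" and A :: "'a::second_countable_topology set"
    and P :: "'s \<Rightarrow> 'a \<Rightarrow> 's measure" and pol :: "'s \<Rightarrow> 'a measure"
  assumes measurable_P:
      "(\<lambda>(s, a). P s a) \<in> restrict_space borel (S \<times> A) \<rightarrow>\<^sub>M prob_algebra (restrict_space borel S)"
    and measurable_pol: "pol \<in> restrict_space borel S \<rightarrow>\<^sub>M prob_algebra (restrict_space borel A)"
begin

abbreviation "K \<equiv> sa_step P pol"
abbreviation "B \<equiv> bfun_SA S A"

lemma P_in_prob_algebra:
  assumes "s \<in> S" "a \<in> A"
  shows "prob_space (P s a)" "sets (P s a) = sets (restrict_space borel S)" "space (P s a) = S"
proof -
  have "P s a \<in> space (prob_algebra (restrict_space borel S))"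
    using measurable_space[OF measurable_P, of "(s, a)"] assms by (simp add: space_restrict_space)
  then show "prob_space (P s a)" and sets: "sets (P s a) = sets (restrict_space borel S)"
    by (auto simp: space_prob_algebra)
  from sets_eq_imp_space_eq[OF sets] show "space (P s a) = S" by (simp add: space_restrict_space)
qed

lemma pol_in_prob_algebra:
  assumes "s \<in> S"
  shows "prob_space (pol s)" "sets (pol s) = sets (restrict_space borel A)" "space (pol s) = A"
proof -
  have "pol s \<in> space (prob_algebra (restrict_space borel A))"
    using measurable_space[OF measurable_pol, of s] assms by (simp add: space_restrict_space)
  then show "prob_space (pol s)" and sets: "sets (pol s) = sets (restrict_space borel A)"
    by (auto simp: space_prob_algebra)
  from sets_eq_imp_space_eq[OF sets] show "space (pol s) = A" by (simp add: space_restrict_space)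
qed

lemma borel_measurable_pol:
  assumes "q \<in> B" "s \<in> S"
  shows "q s \<in> borel_measurable (pol s)"
proof -
  have "(\<lambda>(s, a). q s a) \<in> borel_measurable (restrict_space borel S \<Otimes>\<^sub>M restrict_space borel A)"
    using assms(1) bfun_SA_iff measurable_restrict_borel_Times by blast
  then have "(\<lambda>a. (\<lambda>(s, a). q s a) (s, a)) \<in> borel_measurable (restrict_space borel A)"
    by (rule measurable_Pair2) (use assms(2) in \<open>simp add: space_restrict_space\<close>)
  moreover have "pol s \<rightarrow>\<^sub>M borel = restrict_space borel A \<rightarrow>\<^sub>M (borel :: real measure)"
    by (rule measurable_cong_sets) (simp_all add: pol_in_prob_algebra assms(2))
  ultimately show ?thesis by simp
qed

lemma integrable_pol:
  assumes "q \<in> B" "s \<in> S"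
  shows "integrable (pol s) (q s)"
proof -
  interpret prob_space "pol s" using pol_in_prob_algebra assms(2) by blast
  obtain M where "\<forall>s\<in>S. \<forall>a\<in>A. \<bar>q s a\<bar> \<le> M" using assms(1) bfun_SA_iff by metis
  then show ?thesis
    using borel_measurable_pol[OF assms] pol_in_prob_algebra(3)[OF assms(2)] assms(2)
    by (intro integrable_const_bound[where B = M]) auto
qed

lemma policy_average_measurable:
  assumes "q \<in> B"
  shows "(\<lambda>s'. \<integral>a'. q s' a' \<partial>pol s') \<in> borel_measurable (restrict_space borel S)"
proof -
  have [measurable]: "(\<lambda>(s, a). q s a) \<in> borel_measurable (restrict_space borel S \<Otimes>\<^sub>M restrict_space borel A)"
    using assms bfun_SA_iff measurable_restrict_borel_Times by blast
  note pol [measurable] = measurable_prob_algebraD[OF measurable_pol]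
  \<comment> \<open>Only parametrised nonnegative integrals are known to be measurable, so split q into
    its positive and negative parts.\<close>
  have "(\<lambda>s'. \<integral>\<^sup>+a'. ennreal (q s' a') \<partial>pol s') \<in> borel_measurable (restrict_space borel S)"
    "(\<lambda>s'. \<integral>\<^sup>+a'. ennreal (- q s' a') \<partial>pol s') \<in> borel_measurable (restrict_space borel S)"
    by (intro nn_integral_measurable_subprob_algebra2[OF _ pol]; measurable)+
  then have "(\<lambda>s'. enn2real (\<integral>\<^sup>+a'. ennreal (q s' a') \<partial>pol s') - enn2real (\<integral>\<^sup>+a'. ennreal (- q s' a') \<partial>pol s'))
     \<in> borel_measurable (restrict_space borel S)" by measurable
  then show ?thesis
  proof (rule measurable_cong[THEN iffD1, rotated])
    fix s' assume "s' \<in> space (restrict_space borel S)"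
    then have "integrable (pol s') (q s')"
      using integrable_pol[OF assms] by (simp add: space_restrict_space)
    then show "enn2real (\<integral>\<^sup>+a'. ennreal (q s' a') \<partial>pol s') - enn2real (\<integral>\<^sup>+a'. ennreal (- q s' a') \<partial>pol s')
        = (\<integral>a'. q s' a' \<partial>pol s')"
      by (rule real_lebesgue_integral_def[symmetric])
  qed
qed


lemma abs_policy_average_le:
  assumes "q \<in> B" "s \<in> S" "\<forall>s\<in>S. \<forall>a\<in>A. \<bar>q s a\<bar> \<le> M"
  shows "\<bar>\<integral>a. q s a \<partial>pol s\<bar> \<le> M"
  by (rule prob_space.abs_integral_le_const)
    (use assms pol_in_prob_algebra[OF assms(2)] borel_measurable_pol[OF assms(1,2)] in auto)

lemma borel_measurable_P:
  fixes g :: "'s \<Rightarrow> real"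
  assumes "g \<in> borel_measurable (restrict_space borel S)" "s \<in> S" "a \<in> A"
  shows "g \<in> borel_measurable (P s a)"
proof -
  have "P s a \<rightarrow>\<^sub>M borel = restrict_space borel S \<rightarrow>\<^sub>M (borel :: real measure)"
    by (rule measurable_cong_sets) (simp_all add: P_in_prob_algebra assms(2,3))
  then show ?thesis using assms(1) by simp
qed

lemma integrable_P:
  assumes "q \<in> B" "s \<in> S" "a \<in> A"
  shows "integrable (P s a) (\<lambda>s'. \<integral>a'. q s' a' \<partial>pol s')"
proof -
  interpret prob_space "P s a" using P_in_prob_algebra assms(2,3) by blast
  obtain M where "\<forall>s\<in>S. \<forall>a\<in>A. \<bar>q s a\<bar> \<le> M" using assms(1) bfun_SA_iff by metis
  then show ?thesis
    using borel_measurable_P[OF policy_average_measurable[OF assms(1)] assms(2,3)]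
      abs_policy_average_le[OF assms(1)] P_in_prob_algebra(3)[OF assms(2,3)]
    by (intro integrable_const_bound[where B = M]) auto
qed

lemma abs_sa_step_le:
  assumes "q \<in> B" "\<forall>s\<in>S. \<forall>a\<in>A. \<bar>q s a\<bar> \<le> M" "s \<in> S" "a \<in> A"
  shows "\<bar>K q s a\<bar> \<le> M"
  unfolding sa_step_def
  by (rule prob_space.abs_integral_le_const)
    (use P_in_prob_algebra[OF assms(3,4)] abs_policy_average_le[OF assms(1) _ assms(2)]
      borel_measurable_P[OF policy_average_measurable[OF assms(1)] assms(3,4)] in auto)

lemma sa_step_bfun:
  assumes "q \<in> B"
  shows "K q \<in> B"
proof -
  obtain M where M: "\<forall>s\<in>S. \<forall>a\<in>A. \<bar>q s a\<bar> \<le> M" using assms bfun_SA_iff by metis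
  have "(\<lambda>x. integral\<^sup>L ((\<lambda>(s, a). P s a) x) (\<lambda>s'. \<integral>a'. q s' a' \<partial>pol s'))
      \<in> borel_measurable (restrict_space borel (S \<times> A))"
    by (rule measurable_compose[OF measurable_prob_algebraD[OF measurable_P]
          integral_measurable_subprob_algebra[OF policy_average_measurable[OF assms]]])
  then have "(\<lambda>(s, a). K q s a) \<in> borel_measurable (restrict_space borel (S \<times> A))"
    by (simp add: sa_step_def case_prod_beta')
  then show ?thesis using abs_sa_step_le[OF assms M] bfun_SA_iff by blast
qed

lemma funpow_sa_step_bfun: "q \<in> B \<Longrightarrow> (K ^^ t) q \<in> B"
  by (induction t) (simp_all add: sa_step_bfun)

lemma abs_funpow_sa_step_le:
  assumes "q \<in> B" "\<forall>s\<in>S. \<forall>a\<in>A. \<bar>q s a\<bar> \<le> M" "s \<in> S" "a \<in> A"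
  shows "\<bar>(K ^^ t) q s a\<bar> \<le> M"
  using assms(3,4)
proof (induction t arbitrary: s a)
  case 0
  then show ?case using assms(2) by simp
next
  case (Suc t)
  then show ?case
    using abs_sa_step_le[OF funpow_sa_step_bfun[OF assms(1)]] by simp
qed

lemma sa_step_cong:
  assumes "\<And>s a. s \<in> S \<Longrightarrow> a \<in> A \<Longrightarrow> q1 s a = q2 s a" "s \<in> S" "a \<in> A"
  shows "K q1 s a = K q2 s a"
  unfolding sa_step_def
  using assms P_in_prob_algebra[OF assms(2,3)] pol_in_prob_algebra
  by (intro Bochner_Integration.integral_cong) auto

lemma sa_step_const:
  assumes "s \<in> S" "a \<in> A"
  shows "K (\<lambda>_ _. c) s a = c"
proof -
  have "(\<integral>a'. c \<partial>pol s') = c" if "s' \<in> S" for s'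
    using pol_in_prob_algebra(1)[OF that] by (simp add: prob_space.prob_space)
  then have "K (\<lambda>_ _. c) s a = (\<integral>s'. c \<partial>P s a)"
    unfolding sa_step_def using P_in_prob_algebra[OF assms]
    by (intro Bochner_Integration.integral_cong) auto
  also have "\<dots> = c"
    using prob_space.prob_space[OF P_in_prob_algebra(1)[OF assms]] by simp
  finally show ?thesis .
qed

lemma sa_step_add_scaled:
  assumes "q1 \<in> B" "q2 \<in> B" "s \<in> S" "a \<in> A"
  shows "K (\<lambda>s a. q1 s a + c * q2 s a) s a = K q1 s a + c * K q2 s a"
proof -
  have "K (\<lambda>s a. q1 s a + c * q2 s a) s a
      = (\<integral>s'. (\<integral>a'. q1 s' a' \<partial>pol s') + c * (\<integral>a'. q2 s' a' \<partial>pol s') \<partial>P s a)"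
    unfolding sa_step_def using P_in_prob_algebra[OF assms(3,4)]
    by (intro Bochner_Integration.integral_cong) (auto simp: integrable_pol assms(1,2))
  also have "\<dots> = K q1 s a + c * K q2 s a"
    unfolding sa_step_def using integrable_P[OF assms(1,3,4)] integrable_P[OF assms(2,3,4)] by simp
  finally show ?thesis .
qed

lemma sa_step_sum:
  assumes "finite I" "\<And>i. i \<in> I \<Longrightarrow> f i \<in> B" "s \<in> S" "a \<in> A"
  shows "K (\<lambda>s a. \<Sum>i\<in>I. c i * f i s a) s a = (\<Sum>i\<in>I. c i * K (f i) s a)"
  using assms(1,2)
proof (induction I rule: finite_induct)
  case empty
  then show ?case using sa_step_const[OF assms(3,4), of 0] by simp
next
  case (insert j I)
  have "K (\<lambda>s a. \<Sum>i\<in>insert j I. c i * f i s a) s a = K (\<lambda>s a. (\<Sum>i\<in>I. c i * f i s a) + c j * f j s a) s a"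
    using insert.hyps by (intro sa_step_cong assms(3,4)) simp
  also have "\<dots> = K (\<lambda>s a. \<Sum>i\<in>I. c i * f i s a) s a + c j * K (f j) s a"
    using insert by (intro sa_step_add_scaled bfun_SA_sum assms(3,4)) auto
  finally show ?case using insert by simp
qed

lemma sa_step_suminf:
  assumes "\<And>t. f t \<in> B" "\<And>t s a. s \<in> S \<Longrightarrow> a \<in> A \<Longrightarrow> \<bar>f t s a\<bar> \<le> M"
    and "summable c" "\<And>t. 0 \<le> c t" "s \<in> S" "a \<in> A"
  shows "K (\<lambda>s a. \<Sum>t. c t * f t s a) s a = (\<Sum>t. c t * K (f t) s a)"
proof -
  have M: "\<forall>s\<in>S. \<forall>a\<in>A. \<bar>f t s a\<bar> \<le> M" for t using assms(2) by blast
  have "K (\<lambda>s a. \<Sum>t. c t * f t s a) s a = (\<integral>s'. (\<Sum>t. c t * (\<integral>a'. f t s' a' \<partial>pol s')) \<partial>P s a)"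
    unfolding sa_step_def
  proof (intro Bochner_Integration.integral_cong refl)
    fix s' assume "s' \<in> space (P s a)"
    then have "s' \<in> S" using P_in_prob_algebra[OF assms(5,6)] by simp
    then show "(\<integral>a'. (\<Sum>t. c t * f t s' a') \<partial>pol s') = (\<Sum>t. c t * (\<integral>a'. f t s' a' \<partial>pol s'))"
      using pol_in_prob_algebra[OF \<open>s' \<in> S\<close>] borel_measurable_pol[OF assms(1) \<open>s' \<in> S\<close>] assms(2-4)
      by (intro prob_space.integral_suminf_mult_bounded[where C = M]) auto
  qed
  also have "\<dots> = (\<Sum>t. c t * K (f t) s a)"
    unfolding sa_step_def
    using P_in_prob_algebra[OF assms(5,6)] assms(3,4) abs_policy_average_le[OF assms(1) _ M]
      borel_measurable_P[OF policy_average_measurable[OF assms(1)] assms(5,6)]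
    by (intro prob_space.integral_suminf_mult_bounded[where C = M]) auto
  finally show ?thesis .
qed

end

section \<open>The delayed Bellman operator\<close>

locale delayed_mdp = sa_kernel S A P pol
  for S :: "'s::second_countable_topology set" and A :: "'a::second_countable_topology set"
    and P :: "'s \<Rightarrow> 'a \<Rightarrow> 's measure" and pol :: "'s \<Rightarrow> 'a measure" +
  fixes r :: "'s \<Rightarrow> 'a \<Rightarrow> real" and gam :: "nat \<Rightarrow> real" and D :: nat
  assumes r_bfun: "r \<in> bfun_SA S A"
    and discount: "\<And>i. i \<le> D \<Longrightarrow> 0 < gam i \<and> gam i < 1"
begin

abbreviation "Q d \<equiv> Qfun P pol r gam d"
abbreviation "T \<equiv> TD P pol r gam D"

lemma Qfun_eq_suminf: "Q d = (\<lambda>s a. \<Sum>t. Phi gam d t * (K ^^ t) r s a)"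
  by (intro ext) (simp add: Qfun_def)

lemma Qfun_bfun:
  assumes "d \<le> D"
  shows "Q d \<in> B"
proof -
  obtain M where "\<forall>s\<in>S. \<forall>a\<in>A. \<bar>r s a\<bar> \<le> M" using r_bfun bfun_SA_iff by metis
  then show ?thesis
    unfolding Qfun_eq_suminf using assms discount
    by (intro bfun_SA_suminf[where M = M] funpow_sa_step_bfun r_bfun abs_funpow_sa_step_le
        summable_Phi Phi_nonneg) (auto simp: less_imp_le)
qed

lemma discount_le:
  assumes "d \<le> D" "i \<le> d"
  shows "0 < gam i \<and> gam i < 1"
  using assms discount by simp

lemma sa_step_Qfun:
  assumes "d \<le> D" "s \<in> S" "a \<in> A"
  shows "K (Q d) s a = (\<Sum>t. Phi gam d t * (K ^^ Suc t) r s a)"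
proof -
  obtain M where "\<forall>s\<in>S. \<forall>a\<in>A. \<bar>r s a\<bar> \<le> M" using r_bfun bfun_SA_iff by metis
  then show ?thesis
    unfolding Qfun_eq_suminf using assms discount_le[OF assms(1)]
    by (subst sa_step_suminf[where M = M])
      (auto intro: funpow_sa_step_bfun r_bfun abs_funpow_sa_step_le summable_Phi Phi_nonneg
        simp: less_imp_le)
qed

lemma Qfun_unfold:
  assumes "d \<le> D" "s \<in> S" "a \<in> A"
  shows "Q d s a = r s a + (\<Sum>i\<le>d. gam i * K (Q i) s a)"
proof -
  obtain M where "\<forall>s\<in>S. \<forall>a\<in>A. \<bar>r s a\<bar> \<le> M" using r_bfun bfun_SA_iff by metis
  then have "Q d s a = (K ^^ 0) r s a + (\<Sum>i\<le>d. gam i * (\<Sum>t. Phi gam i t * (K ^^ Suc t) r s a))"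
    unfolding Qfun_def using assms discount_le[OF assms(1)]
    by (intro suminf_Phi_unfold[where M = M] abs_funpow_sa_step_le r_bfun) auto
  also have "\<dots> = r s a + (\<Sum>i\<le>d. gam i * K (Q i) s a)"
    using assms by (simp add: sa_step_Qfun)
  finally show ?thesis .
qed

lemma TD_eq:
  assumes "s \<in> S" "a \<in> A"
  shows "T q s a = r s a + (\<Sum>d<D. gam d * K (Q d) s a) + gam D * K q s a"
proof -
  have "K (\<lambda>s' a'. r s a + 1 * (\<Sum>d<D. gam d * Q d s' a')) s a
      = K (\<lambda>_ _. r s a) s a + 1 * K (\<lambda>s' a'. \<Sum>d<D. gam d * Q d s' a') s a"
    using assms by (intro sa_step_add_scaled bfun_SA_const bfun_SA_sum Qfun_bfun) auto
  also have "K (\<lambda>_ _. r s a) s a = r s a"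
    using assms by (rule sa_step_const)
  also have "K (\<lambda>s' a'. \<Sum>d<D. gam d * Q d s' a') s a = (\<Sum>d<D. gam d * K (Q d) s a)"
    using assms by (intro sa_step_sum Qfun_bfun) auto
  finally show ?thesis by (simp add: TD_def)
qed

lemma TD_bfun:
  assumes "q \<in> B"
  shows "T q \<in> B"
proof -
  have "(\<lambda>s a. (r s a + 1 * (\<Sum>d<D. gam d * K (Q d) s a)) + gam D * K q s a) \<in> B"
    using assms by (intro bfun_SA_add_scaled bfun_SA_sum r_bfun sa_step_bfun Qfun_bfun) auto
  then show ?thesis by (rule bfun_SA_cong) (simp add: TD_eq)
qed

lemma abs_TD_diff_le:
  assumes "q1 \<in> B" "q2 \<in> B" "s \<in> S" "a \<in> A"
  shows "\<bar>T q1 s a - T q2 s a\<bar> \<le> gam D * sup_dist S A q1 q2"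
proof -
  have "T q1 s a - T q2 s a = gam D * (K q1 s a + (- 1) * K q2 s a)"
    using assms(3,4) by (simp add: TD_eq algebra_simps)
  also have "K q1 s a + (- 1) * K q2 s a = K (\<lambda>s a. q1 s a + (- 1) * q2 s a) s a"
    using assms by (rule sa_step_add_scaled[symmetric])
  finally have "T q1 s a - T q2 s a = gam D * K (\<lambda>s a. q1 s a + (- 1) * q2 s a) s a" .
  moreover have "\<bar>K (\<lambda>s a. q1 s a + (- 1) * q2 s a) s a\<bar> \<le> sup_dist S A q1 q2"
    using assms abs_le_sup_dist[OF assms(1,2)]
    by (intro abs_sa_step_le bfun_SA_add_scaled) auto
  ultimately show ?thesis
    using discount[of D] by (simp add: abs_mult mult_left_mono)
qed

lemma TD_contraction:
  assumes "S \<noteq> {}" "A \<noteq> {}" "q1 \<in> B" "q2 \<in> B"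
  shows "sup_dist S A (T q1) (T q2) \<le> gam D * sup_dist S A q1 q2"
  using assms abs_TD_diff_le by (intro sup_dist_le) auto

lemma TD_Qfun:
  assumes "s \<in> S" "a \<in> A"
  shows "T (Q D) s a = Q D s a"
  using assms by (simp add: TD_eq Qfun_unfold[of D] sa_step_Qfun lessThan_Suc_atMost[symmetric])

lemma TD_fixed_point_unique:
  assumes "S \<noteq> {}" "A \<noteq> {}" "q \<in> B" "\<forall>s\<in>S. \<forall>a\<in>A. T q s a = q s a" "s \<in> S" "a \<in> A"
  shows "q s a = Q D s a"
proof -
  have QD: "Q D \<in> B" by (rule Qfun_bfun) simp
  have "sup_dist S A q (Q D) = sup_dist S A (T q) (T (Q D))"
    using assms(4) TD_Qfun by (intro sup_dist_cong) auto
  also have "\<dots> \<le> gam D * sup_dist S A q (Q D)"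
    by (rule TD_contraction[OF assms(1-3) QD])
  finally have "sup_dist S A q (Q D) \<le> 0"
    using discount[of D] by (simp add: mult_le_cancel_right1)
  then show ?thesis
    using abs_le_sup_dist[OF assms(3) QD assms(5,6)] by linarith
qed

end

theorem proposition1:
  fixes S :: "'s::euclidean_space set" and A :: "'a::euclidean_space set"
    and P :: "'s \<Rightarrow> 'a \<Rightarrow> 's measure" and pol :: "'s \<Rightarrow> 'a measure"
    and r :: "'s \<Rightarrow> 'a \<Rightarrow> real" and gam :: "nat \<Rightarrow> real" and D :: nat
  assumes "compact S" "S \<noteq> {}" "compact A" "A \<noteq> {}"
    and "(\<lambda>(s,a). P s a) \<in> measurable (restrict_space borel (S \<times> A)) (prob_algebra (restrict_space borel S))"
    and "pol \<in> measurable (restrict_space borel S) (prob_algebra (restrict_space borel A))"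
    and "continuous_on (S \<times> A) (\<lambda>(s,a). r s a)"
    and "\<And>i. i \<le> D \<Longrightarrow> 0 < gam i \<and> gam i < 1"
  shows "(\<forall>q \<in> bfun_SA S A. TD P pol r gam D q \<in> bfun_SA S A)
       \<and> (\<forall>q1 \<in> bfun_SA S A. \<forall>q2 \<in> bfun_SA S A.
            sup_dist S A (TD P pol r gam D q1) (TD P pol r gam D q2) \<le> gam D * sup_dist S A q1 q2)
       \<and> Qfun P pol r gam D \<in> bfun_SA S A
       \<and> (\<forall>s\<in>S. \<forall>a\<in>A. TD P pol r gam D (Qfun P pol r gam D) s a = Qfun P pol r gam D s a)
       \<and> (\<forall>q \<in> bfun_SA S A. (\<forall>s\<in>S. \<forall>a\<in>A. TD P pol r gam D q s a = q s a)
            \<longrightarrow> (\<forall>s\<in>S. \<forall>a\<in>A. q s a = Qfun P pol r gam D s a))"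
proof -
  interpret delayed_mdp S A P pol r gam D
    by unfold_locales (use assms bfun_SA_continuous_on in auto)
  show ?thesis
  proof (intro conjI ballI impI)
    show "TD P pol r gam D q \<in> bfun_SA S A" if "q \<in> bfun_SA S A" for q
      using that by (rule TD_bfun)
    show "sup_dist S A (TD P pol r gam D q1) (TD P pol r gam D q2) \<le> gam D * sup_dist S A q1 q2"
      if "q1 \<in> bfun_SA S A" "q2 \<in> bfun_SA S A" for q1 q2
      using assms(2,4) that by (rule TD_contraction)
    show "Qfun P pol r gam D \<in> bfun_SA S A" by (rule Qfun_bfun) simp
    show "TD P pol r gam D (Qfun P pol r gam D) s a = Qfun P pol r gam D s a"
      if "s \<in> S" "a \<in> A" for s a
      using that by (rule TD_Qfun)
    show "q s a = Qfun P pol r gam D s a"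
      if "q \<in> bfun_SA S A" "\<forall>s\<in>S. \<forall>a\<in>A. TD P pol r gam D q s a = q s a" "s \<in> S" "a \<in> A"
      for q s a
      using assms(2,4) that by (rule TD_fixed_point_unique)
  qed
qed

end
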